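(* Let $(a,b,c,d)\in\mathbb{Z}_{\ge0}^4$ and let $t$ be a positive integer with $t\le q_0-1$. Then $aq+b(q+q_0)+c(q+2q_0)+d(q+2q_0+1)\le t(q+2q_0+1)$ if and only if $a+b+c+d\le t$.
   Context: $n\ge2$ is an integer, $q_0=2^n$ and $q=2q_0^2$. *)

theory Defs
  imports Main
begin

end

theory Submission
  imports Defs
begin

text \<open>All four weights lie between \<open>q\<close> and \<open>q + 2q\<^sub>0 + 1\<close>, and since \<open>t < q\<^sub>0\<close> gives
  \<open>t(2q\<^sub>0 + 1) < 2q\<^sub>0\<^sup>2 = q\<close>, the budget \<open>t(q + 2q\<^sub>0 + 1)\<close> is smaller than \<open>(t + 1)q\<close>.
  Hence the weighted sum stays within the budget exactly when at most \<open>t\<close> items are counted.\<close>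

lemma weighted_count_le_iff:
  fixes a b c d t lo hi wb wc :: nat
  assumes "lo \<le> wb" "wb \<le> hi" "lo \<le> wc" "wc \<le> hi" "lo \<le> hi"
    and "t * hi < (t + 1) * lo"
  shows "a * lo + b * wb + c * wc + d * hi \<le> t * hi \<longleftrightarrow> a + b + c + d \<le> t"
proof
  assume budget: "a * lo + b * wb + c * wc + d * hi \<le> t * hi"
  have "(a + b + c + d) * lo = a * lo + b * lo + c * lo + d * lo"
    by (simp add: distrib_right)
  also have "\<dots> \<le> a * lo + b * wb + c * wc + d * hi"
    using assms(1,3,5) by (intro add_mono mult_left_mono) auto
  finally have "(a + b + c + d) * lo < (t + 1) * lo"
    using budget assms(6) by linarith
  then show "a + b + c + d \<le> t" by (metis Suc_eq_plus1 less_Suc_eq_le mult_less_cancel2)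
next
  assume "a + b + c + d \<le> t"
  have "a * lo + b * wb + c * wc + d * hi \<le> a * hi + b * hi + c * hi + d * hi"
    using assms(2,4,5) by (intro add_mono mult_left_mono) auto
  also have "\<dots> = (a + b + c + d) * hi" by (simp add: distrib_right)
  also have "\<dots> \<le> t * hi" using \<open>a + b + c + d \<le> t\<close> by simp
  finally show "a * lo + b * wb + c * wc + d * hi \<le> t * hi" .
qed

lemma mult_odd_lt_twice_square:
  fixes t q0 :: nat
  assumes "t < q0"
  shows "t * (2 * q0 + 1) < 2 * q0 ^ 2"
proof -
  have "(t + 1) * (2 * q0 + 1) \<le> q0 * (2 * q0 + 1)"
    using assms by (intro mult_right_mono) auto
  then show ?thesis by (simp add: power2_eq_square)
qed

theorem lemma3p1:
  fixes n a b c d t q0 q :: nat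
  assumes "n \<ge> 2"
    and "q0 = 2 ^ n"
    and "q = 2 * q0 ^ 2"
    and "0 < t" and "t \<le> q0 - 1"
  shows "a * q + b * (q + q0) + c * (q + 2 * q0) + d * (q + 2 * q0 + 1) \<le> t * (q + 2 * q0 + 1)
         \<longleftrightarrow> a + b + c + d \<le> t"
proof (rule weighted_count_le_iff)
  have "t < q0" using assms(2,5) by (simp add: le_diff_conv2)
  then have "t * (2 * q0 + 1) < q" using assms(3) mult_odd_lt_twice_square by simp
  then show "t * (q + 2 * q0 + 1) < (t + 1) * q" by (simp add: algebra_simps)
qed simp_all
end
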